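(* Let $F:\mathbb{R}^p\to\mathbb{R}^p$ be single-valued and $T:\mathbb{R}^p\rightrightarrows\mathbb{R}^p$ (not necessarily monotone), $\Phi:=F+T$, $\eta>0$, $\beta>0$, and assume $\mathrm{ran}\,J_{\eta T}\subseteq\mathrm{dom}\,F=\mathbb{R}^p$ and $\mathrm{dom}\,J_{\eta T}=\mathbb{R}^p$, with the resolvents single-valued. Let $\kappa_1,\kappa_2\ge0$ and let $\{(x^k,y^k)\}$ be generated by the scheme (GFBFS2): start from $x^0\in\mathrm{dom}\,\Phi$, set $x^{-1}=y^{-1}:=x^0$, and for $k\ge0$ $$y^k:=J_{\frac{\eta}{\beta}T}\big(x^k-\tfrac{\eta}{\beta}u^k\big),\qquad x^{k+1}:=\beta y^k+(1-\beta)x^k-\eta(Fy^k-u^k),$$ for some $u^k\in\mathbb{R}^p$, and set $\zeta^k:=\frac{\beta}{\eta}(x^k-y^k)-u^k\in Ty^k$. Then for any $\gamma>0$, any $x^\star\in\mathrm{zer}\,\Phi$ and any $k\ge0$, $$\begin{aligned}\|x^{k+1}-x^\star\|^2\le{}&\|x^k-x^\star\|^2-\beta\|x^k-y^k\|^2+\tfrac{\eta^2}{\gamma}\|Fy^k-u^k\|^2-(\beta-\gamma)\|x^{k+1}-y^k\|^2\\&-2\eta\langle Fy^k+\zeta^k,y^k-x^\star\rangle-(1-\beta)\|x^{k+1}-x^k\|^2.\end{aligned}$$ Moreover, assume in addition that $F$ is $L$-Lipschitz continuous, that $u^k$ satisfies $\|Fx^k-u^k\|^2\le\kappa_1\|Fx^k-Fy^{k-1}\|^2+\kappa_2\|Fx^k-Fx^{k-1}\|^2$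 for all $k\ge0$, and that there exist $x^\star\in\mathrm{zer}\,\Phi$ and $\rho\ge0$ with $\langle w,x-x^\star\rangle\ge-\rho\|w\|^2$ for all $(x,w)\in\mathrm{gra}\,\Phi$. For $r>0$ and $\gamma>0$ define $$\mathcal{P}_k:=\|x^k-x^\star\|^2+\tfrac{\kappa_1(1+r)L^2\eta^2}{r\gamma}\|x^k-y^{k-1}\|^2+\tfrac{\kappa_2(1+r)L^2\eta^2}{r\gamma}\|x^k-x^{k-1}\|^2.$$ Then for any $s>0$, $\mu\in[0,1]$ and $k\ge0$, $$\begin{aligned}\mathcal{P}_{k+1}\le{}&\mathcal{P}_k-\Big(\beta-\tfrac{(1+r)L^2\eta^2}{\gamma}-\tfrac{2\mu\rho(1+s)}{s\eta}\Big)\|y^k-x^k\|^2\\&-\Big(\beta-\gamma-\tfrac{\kappa_1(1+r)L^2\eta^2}{r\gamma}-\tfrac{2\mu\rho(1+s)}{\eta}\Big)\|x^{k+1}-y^k\|^2\\&-\Big(1-\beta-\tfrac{\kappa_2(1+r)L^2\eta^2}{r\gamma}-\tfrac{2(1-\mu)\rho}{\eta}\Big)\|x^{k+1}-x^k\|^2.\end{aligned}$$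
   Context: $\mathrm{zer}\,\Phi:=\{x:0\in Fx+Tx\}$, $\mathrm{gra}\,\Phi:=\{(x,w):w\in\Phi x\}$. $J_{\lambda T}:=(\mathbb{I}+\lambda T)^{-1}$ is the resolvent of $\lambda T$; $\mathrm{ran}$ and $\mathrm{dom}$ denote range and domain. $F$ is $L$-Lipschitz if $\|Fx-Fy\|\le L\|x-y\|$. *)

theory Defs
  imports "HOL-Analysis.Analysis"
begin

definition resolvent :: "real \<Rightarrow> ('a::real_vector \<Rightarrow> 'a set) \<Rightarrow> 'a \<Rightarrow> 'a set" where
  "resolvent lam T x = {z. \<exists>w\<in>T z. x = z + lam *\<^sub>R w}"
  \<comment> \<open>J_{lam T} = (I + lam T)^{-1}\<close>

definition op_dom :: "('a \<Rightarrow> 'b set) \<Rightarrow> 'a set" where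
  "op_dom A = {x. A x \<noteq> {}}"

definition op_ran :: "('a \<Rightarrow> 'b set) \<Rightarrow> 'b set" where
  "op_ran A = (\<Union>x. A x)"

definition single_valued_op :: "('a \<Rightarrow> 'b set) \<Rightarrow> bool" where
  "single_valued_op A \<longleftrightarrow> (\<forall>x. \<forall>y\<in>A x. \<forall>z\<in>A x. y = z)"

definition sum_op :: "('a \<Rightarrow> 'a::real_vector) \<Rightarrow> ('a \<Rightarrow> 'a set) \<Rightarrow> 'a \<Rightarrow> 'a set" where
  "sum_op F T x = {F x + t | t. t \<in> T x}"

definition zer :: "('a \<Rightarrow> 'a::real_vector set) \<Rightarrow> 'a set" where
  "zer Phi = {x. 0 \<in> Phi x}"

definition gra :: "('a \<Rightarrow> 'b set) \<Rightarrow> ('a \<times> 'b) set" where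
  "gra A = {(x, w). w \<in> A x}"

end

theory Submission
  imports Defs
begin

text \<open>
  Put \<zeta> = (\<beta>/\<eta>)(x - y) - u, so that \<zeta> \<in> T y by the resolvent step, and w = F y + \<zeta>,
  so that (y, w) lies in the graph of \<Phi> and \<eta> w = x - x', where x' is the next iterate.
  Expanding the square of x' - x\<star> along the update gives an exact identity whose only term
  of indefinite sign besides \<langle>w, y - x\<star>\<rangle> is -2\<eta>\<langle>F y - u, x' - y\<rangle>; Young's
  inequality with weight \<gamma> turns it into the first estimate.

  For the potential estimate, F y - u is split through F x with Young's weight r, and both
  pieces are bounded by the Lipschitz constant and the assumed control of u by the previous
  iterates; the previous-iterate terms are exactly what the extra summands of the potential
  absorb. The weak Minty condition bounds -2\<eta>\<langle>w, y - x\<star>\<rangle> by (2\<rho>/\<eta>) \<parallel>x' - x\<parallel>^2,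
  and a fraction \<mu> of this is redistributed onto \<parallel>x' - y\<parallel>^2 and \<parallel>y - x\<parallel>^2 with Young's weight s.
\<close>

lemma resolvent_iff:
  assumes "lam \<noteq> 0"
  shows "z \<in> resolvent lam T v \<longleftrightarrow> inverse lam *\<^sub>R (v - z) \<in> T z"
proof
  assume "z \<in> resolvent lam T v"
  then obtain w where "w \<in> T z" "v = z + lam *\<^sub>R w"
    unfolding resolvent_def by blast
  then show "inverse lam *\<^sub>R (v - z) \<in> T z"
    using assms by simp
next
  assume "inverse lam *\<^sub>R (v - z) \<in> T z"
  moreover have "v = z + lam *\<^sub>R (inverse lam *\<^sub>R (v - z))"
    using assms by simp
  ultimately show "z \<in> resolvent lam T v"
    unfolding resolvent_def by blast
qed

lemma gfbfs2_resolvent_step_mem: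
  assumes "eta \<noteq> 0" "beta \<noteq> 0"
    and "y \<in> resolvent (eta / beta) T (x - (eta / beta) *\<^sub>R u)"
  shows "(beta / eta) *\<^sub>R (x - y) - u \<in> T y"
proof -
  have "inverse (eta / beta) *\<^sub>R (x - (eta / beta) *\<^sub>R u - y) \<in> T y"
    using assms(3) by (simp add: resolvent_iff assms(1,2))
  moreover have "inverse (eta / beta) *\<^sub>R (x - (eta / beta) *\<^sub>R u - y) = (beta / eta) *\<^sub>R (x - y) - u"
    using assms(1,2) by (simp add: algebra_simps)
  ultimately show ?thesis
    by simp
qed

lemma gra_sum_op_iff: "(z, w) \<in> gra (sum_op F T) \<longleftrightarrow> w - F z \<in> T z"
proof
  assume "(z, w) \<in> gra (sum_op F T)"
  then obtain t where "t \<in> T z" "w = F z + t"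
    unfolding gra_def sum_op_def by blast
  then show "w - F z \<in> T z"
    by simp
next
  assume "w - F z \<in> T z"
  moreover have "w = F z + (w - F z)"
    by simp
  ultimately show "(z, w) \<in> gra (sum_op F T)"
    unfolding gra_def sum_op_def by blast
qed

lemma inner_le_weighted_norms:
  fixes p q :: "'a::real_inner"
  assumes "r > 0"
  shows "2 * (p \<bullet> q) \<le> r * (norm p)\<^sup>2 + (norm q)\<^sup>2 / r"
proof -
  have "0 \<le> (norm (r *\<^sub>R p - q))\<^sup>2 / r"
    using assms by simp
  also have "\<dots> = r * (norm p)\<^sup>2 + (norm q)\<^sup>2 / r - 2 * (p \<bullet> q)"
    using assms by (simp add: power2_norm_eq_inner inner_simps inner_commute[of q p] field_simps)
  finally show ?thesis
    by simp
qed

lemma norm_add_squared_le: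
  fixes p q :: "'a::real_inner"
  assumes "r > 0"
  shows "(norm (p + q))\<^sup>2 \<le> (1 + r) * (norm p)\<^sup>2 + (1 + r) / r * (norm q)\<^sup>2"
proof -
  have "(norm (p + q))\<^sup>2 = (norm p)\<^sup>2 + 2 * (p \<bullet> q) + (norm q)\<^sup>2"
    by (simp add: power2_norm_eq_inner inner_simps inner_commute[of q p])
  also have "\<dots> \<le> (norm p)\<^sup>2 + (r * (norm p)\<^sup>2 + (norm q)\<^sup>2 / r) + (norm q)\<^sup>2"
    using inner_le_weighted_norms[OF assms] by simp
  also have "\<dots> = (1 + r) * (norm p)\<^sup>2 + (1 + r) / r * (norm q)\<^sup>2"
    using assms by (simp add: field_simps)
  finally show ?thesis .
qed

lemma lipschitz_on_norm_squared:
  assumes "L-lipschitz_on X f" "x \<in> X" "y \<in> X"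
  shows "(norm (f x - f y))\<^sup>2 \<le> L\<^sup>2 * (norm (x - y))\<^sup>2"
proof -
  have "norm (f x - f y) \<le> L * norm (x - y)"
    using lipschitz_on_normD[OF assms] .
  then have "(norm (f x - f y))\<^sup>2 \<le> (L * norm (x - y))\<^sup>2"
    by (rule power_mono) simp
  then show ?thesis
    by (simp add: power_mult_distrib)
qed

lemma gfbfs2_step_identity:
  fixes x y z d :: "'a::real_inner"
  assumes x': "x' = beta *\<^sub>R y + (1 - beta) *\<^sub>R x - eta *\<^sub>R d"
  shows "(norm (x' - z))\<^sup>2 = (norm (x - z))\<^sup>2 - beta * (norm (x - y))\<^sup>2
    - beta * (norm (x' - y))\<^sup>2 - 2 * ((x - x') \<bullet> (y - z))
    - (1 - beta) * (norm (x' - x))\<^sup>2 - 2 * eta * (d \<bullet> (x' - y))"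
  unfolding x' power2_norm_eq_inner
  by (simp add: algebra_simps inner_commute power2_eq_square)

lemma gfbfs2_step_estimate:
  fixes F :: "'a::real_inner \<Rightarrow> 'a"
  assumes eta: "eta \<noteq> 0" and gamma: "gamma > 0"
    and x': "x' = beta *\<^sub>R y + (1 - beta) *\<^sub>R x - eta *\<^sub>R (F y - u)"
  shows "(norm (x' - z))\<^sup>2 \<le> (norm (x - z))\<^sup>2 - beta * (norm (x - y))\<^sup>2
    + eta\<^sup>2 / gamma * (norm (F y - u))\<^sup>2 - (beta - gamma) * (norm (x' - y))\<^sup>2
    - 2 * eta * ((F y + ((beta / eta) *\<^sub>R (x - y) - u)) \<bullet> (y - z))
    - (1 - beta) * (norm (x' - x))\<^sup>2"
proof -
  have "x - x' = eta *\<^sub>R (F y + ((beta / eta) *\<^sub>R (x - y) - u))"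
    using eta x' by (simp add: algebra_simps)
  then have inner_eq: "(x - x') \<bullet> (y - z) = eta * ((F y + ((beta / eta) *\<^sub>R (x - y) - u)) \<bullet> (y - z))"
    by simp
  have "2 * ((x' - y) \<bullet> (- eta *\<^sub>R (F y - u)))
      \<le> gamma * (norm (x' - y))\<^sup>2 + (norm (- eta *\<^sub>R (F y - u)))\<^sup>2 / gamma"
    using inner_le_weighted_norms[OF gamma] .
  then have "- 2 * eta * ((F y - u) \<bullet> (x' - y))
      \<le> gamma * (norm (x' - y))\<^sup>2 + eta\<^sup>2 / gamma * (norm (F y - u))\<^sup>2"
    by (simp add: inner_commute power_mult_distrib)
  then show ?thesis
    using gfbfs2_step_identity[OF x', of z] inner_eq by (simp only: left_diff_distrib)
qed

lemma gfbfs2_operator_error_bound: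
  fixes F :: "'a::real_normed_vector \<Rightarrow> 'b::real_inner"
  assumes lip: "L-lipschitz_on UNIV F" and r: "r > 0"
    and kappa1: "kappa1 \<ge> 0" and kappa2: "kappa2 \<ge> 0"
    and u: "(norm (F x - u))\<^sup>2
      \<le> kappa1 * (norm (F x - F y_prev))\<^sup>2 + kappa2 * (norm (F x - F x_prev))\<^sup>2"
  shows "(norm (F y - u))\<^sup>2 \<le> (1 + r) * L\<^sup>2 * (norm (y - x))\<^sup>2
    + (1 + r) / r * L\<^sup>2 * (kappa1 * (norm (x - y_prev))\<^sup>2 + kappa2 * (norm (x - x_prev))\<^sup>2)"
proof -
  have lip_sq: "(norm (F p - F q))\<^sup>2 \<le> L\<^sup>2 * (norm (p - q))\<^sup>2" for p q
    using lipschitz_on_norm_squared[OF lip] by simp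
  have "(norm (F x - u))\<^sup>2
      \<le> kappa1 * (L\<^sup>2 * (norm (x - y_prev))\<^sup>2) + kappa2 * (L\<^sup>2 * (norm (x - x_prev))\<^sup>2)"
    using u add_mono[OF mult_left_mono[OF lip_sq[of x y_prev] kappa1]
      mult_left_mono[OF lip_sq[of x x_prev] kappa2]]
    by linarith
  also have "\<dots> = L\<^sup>2 * (kappa1 * (norm (x - y_prev))\<^sup>2 + kappa2 * (norm (x - x_prev))\<^sup>2)"
    by (simp add: algebra_simps)
  finally have "(1 + r) / r * (norm (F x - u))\<^sup>2
      \<le> (1 + r) / r * (L\<^sup>2 * (kappa1 * (norm (x - y_prev))\<^sup>2 + kappa2 * (norm (x - x_prev))\<^sup>2))"
    by (rule mult_left_mono) (use r in simp)
  moreover have "(1 + r) * (norm (F y - F x))\<^sup>2 \<le> (1 + r) * L\<^sup>2 * (norm (y - x))\<^sup>2"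
    using mult_left_mono[OF lip_sq, of "1 + r"] r by simp
  moreover have "(norm (F y - u))\<^sup>2 \<le> (1 + r) * (norm (F y - F x))\<^sup>2 + (1 + r) / r * (norm (F x - u))\<^sup>2"
    using norm_add_squared_le[OF r, of "F y - F x" "F x - u"] by simp
  ultimately show ?thesis
    by (simp add: mult.assoc)
qed

lemma weak_minty_term_bound:
  fixes w v :: "'a::real_inner"
  assumes eta: "eta > 0" and w: "eta *\<^sub>R w = x - x'"
    and weak_minty: "w \<bullet> v \<ge> - rho * (norm w)\<^sup>2"
  shows "- 2 * eta * (w \<bullet> v) \<le> 2 * rho / eta * (norm (x' - x))\<^sup>2"
proof -
  have "- 2 * eta * (w \<bullet> v) \<le> 2 * eta * (rho * (norm w)\<^sup>2)"
    using mult_left_mono[OF weak_minty, of "2 * eta"] eta by simp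
  also have "\<dots> = 2 * rho / eta * (eta * norm w)\<^sup>2"
    using eta by (simp add: field_simps power2_eq_square)
  also have "eta * norm w = norm (x' - x)"
    using arg_cong[OF w, of norm] eta by (simp add: norm_minus_commute)
  finally show ?thesis .
qed

lemma gfbfs2_potential_step:
  fixes F :: "'a::real_inner \<Rightarrow> 'a"
  assumes eta: "eta > 0" and gamma: "gamma > 0" and r: "r > 0" and s: "s > 0"
    and rho: "rho \<ge> 0" and mu: "0 \<le> mu" "mu \<le> 1"
    and kappa1: "kappa1 \<ge> 0" and kappa2: "kappa2 \<ge> 0"
    and lip: "L-lipschitz_on UNIV F"
    and u: "(norm (F x - u))\<^sup>2
      \<le> kappa1 * (norm (F x - F y_prev))\<^sup>2 + kappa2 * (norm (F x - F x_prev))\<^sup>2"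
    and x': "x' = beta *\<^sub>R y + (1 - beta) *\<^sub>R x - eta *\<^sub>R (F y - u)"
    and weak_minty: "(F y + ((beta / eta) *\<^sub>R (x - y) - u)) \<bullet> (y - z)
      \<ge> - rho * (norm (F y + ((beta / eta) *\<^sub>R (x - y) - u)))\<^sup>2"
  defines "c1 \<equiv> kappa1 * (1 + r) * L\<^sup>2 * eta\<^sup>2 / (r * gamma)"
    and "c2 \<equiv> kappa2 * (1 + r) * L\<^sup>2 * eta\<^sup>2 / (r * gamma)"
  shows "(norm (x' - z))\<^sup>2 + c1 * (norm (x' - y))\<^sup>2 + c2 * (norm (x' - x))\<^sup>2
    \<le> (norm (x - z))\<^sup>2 + c1 * (norm (x - y_prev))\<^sup>2 + c2 * (norm (x - x_prev))\<^sup>2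
      - (beta - (1 + r) * L\<^sup>2 * eta\<^sup>2 / gamma - 2 * mu * rho * (1 + s) / (s * eta))
          * (norm (y - x))\<^sup>2
      - (beta - gamma - c1 - 2 * mu * rho * (1 + s) / eta) * (norm (x' - y))\<^sup>2
      - (1 - beta - c2 - 2 * (1 - mu) * rho / eta) * (norm (x' - x))\<^sup>2"
proof -
  let ?w = "F y + ((beta / eta) *\<^sub>R (x - y) - u)"
  have "eta *\<^sub>R ?w = x - x'"
    using eta x' by (simp add: algebra_simps)
  then have minty: "- 2 * eta * (?w \<bullet> (y - z)) \<le> 2 * rho / eta * (norm (x' - x))\<^sup>2"
    using weak_minty_term_bound[OF eta _ weak_minty] by blast
  have step: "(norm (x' - z))\<^sup>2 \<le> (norm (x - z))\<^sup>2 - beta * (norm (y - x))\<^sup>2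
    + eta\<^sup>2 / gamma * (norm (F y - u))\<^sup>2 - (beta - gamma) * (norm (x' - y))\<^sup>2
    - 2 * eta * (?w \<bullet> (y - z)) - (1 - beta) * (norm (x' - x))\<^sup>2"
    using gfbfs2_step_estimate[where F = F and y = y and u = u and z = z, OF _ gamma x'] eta
    by (simp add: norm_minus_commute)
  have "eta\<^sup>2 / gamma * (norm (F y - u))\<^sup>2 \<le> eta\<^sup>2 / gamma * ((1 + r) * L\<^sup>2 * (norm (y - x))\<^sup>2
    + (1 + r) / r * L\<^sup>2 * (kappa1 * (norm (x - y_prev))\<^sup>2 + kappa2 * (norm (x - x_prev))\<^sup>2))"
    using gfbfs2_operator_error_bound[OF lip r kappa1 kappa2 u] gamma
    by (intro mult_left_mono) simp_all
  also have "\<dots> = (1 + r) * L\<^sup>2 * eta\<^sup>2 / gamma * (norm (y - x))\<^sup>2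
    + c1 * (norm (x - y_prev))\<^sup>2 + c2 * (norm (x - x_prev))\<^sup>2"
    unfolding c1_def c2_def using r gamma by (simp add: field_simps)
  finally have error: "eta\<^sup>2 / gamma * (norm (F y - u))\<^sup>2 \<le> \<dots>" .
  have "2 * mu * rho / eta * (norm (x' - x))\<^sup>2
    \<le> 2 * mu * rho / eta * ((1 + s) * (norm (x' - y))\<^sup>2 + (1 + s) / s * (norm (y - x))\<^sup>2)"
    using norm_add_squared_le[OF s, of "x' - y" "y - x"] eta rho mu
    by (intro mult_left_mono) simp_all
  also have "\<dots> = 2 * mu * rho * (1 + s) / eta * (norm (x' - y))\<^sup>2
    + 2 * mu * rho * (1 + s) / (s * eta) * (norm (y - x))\<^sup>2"
    using s eta by (simp add: field_simps)
  finally have mu_part: "2 * mu * rho / eta * (norm (x' - x))\<^sup>2 \<le> \<dots>" .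
  have "2 * rho / eta = 2 * mu * rho / eta + 2 * (1 - mu) * rho / eta"
    by (simp add: algebra_simps add_divide_distrib[symmetric])
  then show ?thesis
    using step minty error mu_part by (simp add: algebra_simps)
qed

lemma gfbfs2_potential_decrease:
  fixes F :: "'a::real_inner \<Rightarrow> 'a" and x y u :: "int \<Rightarrow> 'a"
  assumes eta: "eta > 0" and kappa1: "kappa1 \<ge> 0" and kappa2: "kappa2 \<ge> 0"
    and zeta: "\<forall>k\<ge>0. (beta / eta) *\<^sub>R (x k - y k) - u k \<in> T (y k)"
    and xstep: "\<And>k. k \<ge> 0 \<Longrightarrow>
        x (k + 1) = beta *\<^sub>R y k + (1 - beta) *\<^sub>R x k - eta *\<^sub>R (F (y k) - u k)"
    and lip: "L-lipschitz_on UNIV F"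
    and u: "\<forall>k\<ge>0. (norm (F (x k) - u k))\<^sup>2
      \<le> kappa1 * (norm (F (x k) - F (y (k - 1))))\<^sup>2 + kappa2 * (norm (F (x k) - F (x (k - 1))))\<^sup>2"
    and rho: "rho \<ge> 0"
    and weak_minty: "\<forall>(z, w)\<in>gra (sum_op F T). w \<bullet> (z - xs) \<ge> - rho * (norm w)\<^sup>2"
    and "r > 0" "gamma > 0" "s > 0" "0 \<le> mu" "mu \<le> 1" "k \<ge> 0"
  shows "let P = (\<lambda>j. (norm (x j - xs))\<^sup>2
        + kappa1 * (1 + r) * L\<^sup>2 * eta\<^sup>2 / (r * gamma) * (norm (x j - y (j - 1)))\<^sup>2
        + kappa2 * (1 + r) * L\<^sup>2 * eta\<^sup>2 / (r * gamma) * (norm (x j - x (j - 1)))\<^sup>2)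
      in P (k + 1) \<le> P k
        - (beta - (1 + r) * L\<^sup>2 * eta\<^sup>2 / gamma - 2 * mu * rho * (1 + s) / (s * eta))
            * (norm (y k - x k))\<^sup>2
        - (beta - gamma - kappa1 * (1 + r) * L\<^sup>2 * eta\<^sup>2 / (r * gamma)
            - 2 * mu * rho * (1 + s) / eta) * (norm (x (k + 1) - y k))\<^sup>2
        - (1 - beta - kappa2 * (1 + r) * L\<^sup>2 * eta\<^sup>2 / (r * gamma)
            - 2 * (1 - mu) * rho / eta) * (norm (x (k + 1) - x k))\<^sup>2"
proof -
  have "(y k, F (y k) + ((beta / eta) *\<^sub>R (x k - y k) - u k)) \<in> gra (sum_op F T)"
    using zeta \<open>k \<ge> 0\<close> by (simp add: gra_sum_op_iff)
  then show ?thesis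
    using gfbfs2_potential_step[where F = F and y = "y k", OF eta \<open>gamma > 0\<close> \<open>r > 0\<close>
        \<open>s > 0\<close> rho \<open>0 \<le> mu\<close> \<open>mu \<le> 1\<close> kappa1 kappa2 lip _ xstep] u weak_minty \<open>k \<ge> 0\<close>
    by (auto simp: Let_def)
qed

theorem lemma6:
  fixes F :: "'a::euclidean_space \<Rightarrow> 'a"
    and T :: "'a \<Rightarrow> 'a set"
    and x y u :: "int \<Rightarrow> 'a"
    and eta beta kappa1 kappa2 :: real
  assumes eta_pos: "eta > 0" and beta_pos: "beta > 0"
    and ranJ: "op_ran (resolvent eta T) \<subseteq> UNIV"
    and domJ: "op_dom (resolvent eta T) = UNIV"
    and sv1: "single_valued_op (resolvent eta T)"
    and sv2: "single_valued_op (resolvent (eta / beta) T)"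
    and k1: "kappa1 \<ge> 0" and k2: "kappa2 \<ge> 0"
    and x0: "x 0 \<in> op_dom (sum_op F T)"
    and xm1: "x (-1) = x 0" and ym1: "y (-1) = x 0"
    and ystep: "\<And>k. k \<ge> 0 \<Longrightarrow> y k \<in> resolvent (eta / beta) T (x k - (eta / beta) *\<^sub>R u k)"
    and xstep: "\<And>k. k \<ge> 0 \<Longrightarrow>
        x (k + 1) = beta *\<^sub>R y k + (1 - beta) *\<^sub>R x k - eta *\<^sub>R (F (y k) - u k)"
  shows
   "(\<forall>k\<ge>0. (beta / eta) *\<^sub>R (x k - y k) - u k \<in> T (y k))
    \<and> (\<forall>gamma>0. \<forall>xs\<in>zer (sum_op F T). \<forall>k\<ge>0.
        (norm (x (k + 1) - xs))\<^sup>2 \<le> (norm (x k - xs))\<^sup>2 - beta * (norm (x k - y k))\<^sup>2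
          + eta\<^sup>2 / gamma * (norm (F (y k) - u k))\<^sup>2
          - (beta - gamma) * (norm (x (k + 1) - y k))\<^sup>2
          - 2 * eta * ((F (y k) + ((beta / eta) *\<^sub>R (x k - y k) - u k)) \<bullet> (y k - xs))
          - (1 - beta) * (norm (x (k + 1) - x k))\<^sup>2)
    \<and> (\<forall>L xs rho.
        L-lipschitz_on UNIV F
        \<and> (\<forall>k\<ge>0. (norm (F (x k) - u k))\<^sup>2
              \<le> kappa1 * (norm (F (x k) - F (y (k - 1))))\<^sup>2
                + kappa2 * (norm (F (x k) - F (x (k - 1))))\<^sup>2)
        \<and> xs \<in> zer (sum_op F T) \<and> rho \<ge> 0
        \<and> (\<forall>(z, w)\<in>gra (sum_op F T). w \<bullet> (z - xs) \<ge> - rho * (norm w)\<^sup>2)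
      \<longrightarrow> (\<forall>r>0. \<forall>gamma>0. \<forall>s>0. \<forall>mu. 0 \<le> mu \<and> mu \<le> 1 \<longrightarrow> (\<forall>k\<ge>0.
            (let P = (\<lambda>j. (norm (x j - xs))\<^sup>2
                   + kappa1 * (1 + r) * L\<^sup>2 * eta\<^sup>2 / (r * gamma) * (norm (x j - y (j - 1)))\<^sup>2
                   + kappa2 * (1 + r) * L\<^sup>2 * eta\<^sup>2 / (r * gamma) * (norm (x j - x (j - 1)))\<^sup>2)
             in P (k + 1) \<le> P k
                - (beta - (1 + r) * L\<^sup>2 * eta\<^sup>2 / gamma - 2 * mu * rho * (1 + s) / (s * eta))
                    * (norm (y k - x k))\<^sup>2
                - (beta - gamma - kappa1 * (1 + r) * L\<^sup>2 * eta\<^sup>2 / (r * gamma)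
                    - 2 * mu * rho * (1 + s) / eta) * (norm (x (k + 1) - y k))\<^sup>2
                - (1 - beta - kappa2 * (1 + r) * L\<^sup>2 * eta\<^sup>2 / (r * gamma)
                    - 2 * (1 - mu) * rho / eta) * (norm (x (k + 1) - x k))\<^sup>2))))"
proof -
  txt \<open>The hypotheses on the resolvents and on the initialisation only make the scheme well defined;
    the estimates hold for any sequences obeying the two update rules.\<close>
  let "?zeta \<and> ?descent \<and> ?potential" = ?thesis
  have zeta: ?zeta
    using gfbfs2_resolvent_step_mem[OF _ _ ystep] eta_pos beta_pos by simp
  moreover have ?descent
    using gfbfs2_step_estimate[where F = F, OF _ _ xstep] eta_pos by simp
  moreover have ?potential
    by (intro allI impI, elim conjE) (rule gfbfs2_potential_decrease[OF eta_pos k1 k2 zeta xstep])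
  ultimately show ?thesis
    by blast
qed

end
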